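(* For every $t\ge0$ and ($\mathbb{P}$-almost every) $a\in\mathbb{R}^{Nd}$ in the support of the law of $x(0)$, \[ \int_\Omega x(t)\,d\mathbb{P}(x\mid x(0)=a)=e^{-\lambda t}a, \] i.e. $\mathbb{E}[x(t)\mid x(0)]=e^{-\lambda t}x(0)$ under $\mathbb{P}$.
   Context: Let $d\ge2$, $N\ge1$, $\lambda>0$, $\hat n\in\mathbb{R}^d$ a unit vector. For $1\le k\le N$, let $0<\tau_k^1<\tau_k^2<\cdots$ be arrival times of a rate-$\lambda$ Poisson process and $g_k^1,g_k^2,\dots$ Haar-distributed random matrices in $SO(d)$, all mutually independent. Define $\phi_k(t)=I$ for $t<\tau_k^1$ and $\phi_k(t)=g_k^n\cdots g_k^1$ for $t\in[\tau_k^n,\tau_k^{n+1})$. Let $\tau=\max_k\tau_k^1$, $\hat\phi_k(t)=\phi_k(t+\tau)$, and let $\psi(t)\in\mathbb{R}^{Nd}$ be obtained by stacking the vectors $\hat\phi_k(t)^{T}\hat n$, $k=1,\dots,N$; $\psi$ is a stationary process. Let $\Omega=D([0,\infty),\mathbb{R}^{Nd})$ (càdlàg paths) and let $\mathbb{P}$ be the law of $\psi$ on $\Omega$; $x$ denotes a generic element of $\Omega$. *)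

theory Defs
  imports "HOL-Probability.Probability"
begin

definition SO :: "(real^'d^'d) set" where
  "SO = {A. orthogonal_matrix A \<and> det A = 1}"

definition SO_haar :: "(real^'d^'d) measure \<Rightarrow> bool" where
  "SO_haar \<mu> \<longleftrightarrow> sets \<mu> = sets borel \<and> prob_space \<mu> \<and> emeasure \<mu> SO = 1 \<and>
     (\<forall>A\<in>SO. distr \<mu> borel (\<lambda>B. A ** B) = \<mu>)"

text \<open>Poisson process of the k-th particle from its exponential interarrival times
  e k 0, e k 1, ...: arrival k n = tau_k^n (n >= 1), and arrival k 0 = 0.\<close>
definition arrival :: "('k \<Rightarrow> nat \<Rightarrow> 'w \<Rightarrow> real) \<Rightarrow> 'k \<Rightarrow> nat \<Rightarrow> 'w \<Rightarrow> real" where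
  "arrival e k n w = (\<Sum>j<n. e k j w)"

definition jumps :: "('k \<Rightarrow> nat \<Rightarrow> 'w \<Rightarrow> real) \<Rightarrow> 'k \<Rightarrow> real \<Rightarrow> 'w \<Rightarrow> nat" where
  "jumps e k t w = card {n. 1 \<le> n \<and> arrival e k n w \<le> t}"

text \<open>gprod g k n w = g_k^n ... g_k^1 (g k 0 plays the role of g_k^1).\<close>
fun gprod :: "('k \<Rightarrow> nat \<Rightarrow> 'w \<Rightarrow> real^'d^'d) \<Rightarrow> 'k \<Rightarrow> nat \<Rightarrow> 'w \<Rightarrow> real^'d^'d" where
  "gprod g k 0 w = mat 1"
| "gprod g k (Suc n) w = g k n w ** gprod g k n w"

definition phi :: "('k \<Rightarrow> nat \<Rightarrow> 'w \<Rightarrow> real) \<Rightarrow> ('k \<Rightarrow> nat \<Rightarrow> 'w \<Rightarrow> real^'d^'d)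
    \<Rightarrow> 'k \<Rightarrow> real \<Rightarrow> 'w \<Rightarrow> real^'d^'d" where
  "phi e g k t w = gprod g k (jumps e k t w) w"

definition tau :: "('k::finite \<Rightarrow> nat \<Rightarrow> 'w \<Rightarrow> real) \<Rightarrow> 'w \<Rightarrow> real" where
  "tau e w = Max (range (\<lambda>k. arrival e k 1 w))"

definition psi :: "('k::finite \<Rightarrow> nat \<Rightarrow> 'w \<Rightarrow> real) \<Rightarrow> ('k \<Rightarrow> nat \<Rightarrow> 'w \<Rightarrow> real^'d^'d)
    \<Rightarrow> real^'d \<Rightarrow> real \<Rightarrow> 'w \<Rightarrow> real^'d^'k" where
  "psi e g nhat t w = (\<chi> k. transpose (phi e g k (t + tau e w) w) *v nhat)"

text \<open>Mutual independence of all interarrival times and all rotation matrices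
  (indep_vars unfolded, using a sum type as index set since the variables have different types).\<close>
definition all_indep :: "'w measure \<Rightarrow> ('k \<Rightarrow> nat \<Rightarrow> 'w \<Rightarrow> real)
    \<Rightarrow> ('k \<Rightarrow> nat \<Rightarrow> 'w \<Rightarrow> real^'d^'d) \<Rightarrow> bool" where
  "all_indep M e g \<longleftrightarrow> prob_space.indep_sets M
     (\<lambda>i. case i of
        Inl (k, n) \<Rightarrow> {e k n -` A \<inter> space M | A. A \<in> sets (borel :: real measure)}
      | Inr (k, n) \<Rightarrow> {g k n -` A \<inter> space M | A. A \<in> sets (borel :: (real^'d^'d) measure)})
     UNIV"

end

theory Submission
  imports Defs
begin

text \<open>Condition on the numbers \<open>m k\<close> of jumps that the particles have made up to time \<open>tau\<close>;
  these events partition the sample space, and on each of them \<open>psi 0\<close> is a fixed function of the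
  rotations already applied. If particle \<open>k\<close> does not jump in \<open>(tau, tau + t]\<close>, its component of
  \<open>psi t\<close> is that of \<open>psi 0\<close>; by memorylessness of its current exponential interarrival time,
  which is independent of everything \<open>psi 0\<close> depends on, this happens with conditional probability
  \<open>exp (- lam * t)\<close>. If it does jump, its component of \<open>psi t\<close> is linear in the entries of the next
  rotation \<open>g k (m k)\<close>, which is independent of the other factors and, being Haar distributed,
  has centred entries; this part integrates to zero.\<close>

section \<open>Matrices and Haar-distributed rotations\<close>

lemma borel_measurable_vec_nth[measurable]:
  "(\<lambda>x::'a::real_normed_vector^'n. x $ i) \<in> borel_measurable borel"
  by (intro borel_measurable_continuous_onI continuous_on_component continuous_on_id)

lemma borel_measurable_vec:
  fixes f :: "'m \<Rightarrow> 'a::euclidean_space^'n"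
  assumes "\<And>i. (\<lambda>x. f x $ i) \<in> borel_measurable M"
  shows "f \<in> borel_measurable M"
proof (subst borel_measurable_euclidean_space, intro ballI)
  fix b :: "'a^'n" assume "b \<in> Basis"
  then obtain i c where b: "b = axis i c" "c \<in> Basis" by (auto simp: Basis_vec_def)
  have "(\<lambda>x. f x \<bullet> b) = (\<lambda>x. f x $ i \<bullet> c)" by (simp add: b inner_axis)
  then show "(\<lambda>x. f x \<bullet> b) \<in> borel_measurable M" using assms[of i] by simp
qed

lemma borel_measurable_matrix_mult[measurable]:
  fixes f g :: "'m \<Rightarrow> real^'n^'n"
  assumes [measurable]: "f \<in> borel_measurable M" "g \<in> borel_measurable M"
  shows "(\<lambda>x. f x ** g x) \<in> borel_measurable M"
  by (intro borel_measurable_vec) (simp add: matrix_matrix_mult_def)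

lemma borel_measurable_transpose[measurable]:
  fixes f :: "'m \<Rightarrow> real^'n^'n"
  assumes [measurable]: "f \<in> borel_measurable M"
  shows "(\<lambda>x. transpose (f x)) \<in> borel_measurable M"
  by (intro borel_measurable_vec) (simp add: transpose_def)

lemma borel_measurable_matrix_vector_mult[measurable]:
  fixes f :: "'m \<Rightarrow> real^'n^'n"
  assumes [measurable]: "f \<in> borel_measurable M" "g \<in> borel_measurable M"
  shows "(\<lambda>x. f x *v g x) \<in> borel_measurable M"
  by (intro borel_measurable_vec) (simp add: matrix_vector_mult_def)

lemma SO_mult: "A \<in> SO \<Longrightarrow> B \<in> SO \<Longrightarrow> A ** B \<in> SO"
  by (simp add: SO_def orthogonal_matrix_mul det_mul)

lemma SO_id: "mat 1 \<in> SO"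
  by (simp add: SO_def orthogonal_matrix_id)

lemma SO_entry_bound:
  assumes "Q \<in> SO"
  shows "\<bar>Q $ a $ b\<bar> \<le> 1"
proof -
  have "transpose Q ** Q = mat 1"
    using assms by (simp add: SO_def orthogonal_matrix)
  then have "(\<Sum>c\<in>UNIV. Q $ c $ b * Q $ c $ b) = 1"
    by (simp add: vec_eq_iff matrix_matrix_mult_def transpose_def mat_def)
  moreover have "Q $ a $ b * Q $ a $ b \<le> (\<Sum>c\<in>UNIV. Q $ c $ b * Q $ c $ b)"
    by (rule member_le_sum) auto
  ultimately show ?thesis
    by (simp add: abs_square_le_1 power2_eq_square[symmetric])
qed

lemma SO_transpose_unit_vector_bound:
  assumes "Q \<in> SO" "norm (v::real^'d) = 1"
  shows "\<bar>(transpose Q *v v) $ b\<bar> \<le> 1"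
proof -
  have "orthogonal_matrix (transpose Q)"
    using assms(1) by (simp add: SO_def)
  then have "orthogonal_transformation (\<lambda>x. transpose Q *v x)"
    unfolding orthogonal_transformation_matrix matrix_of_matrix_vector_mul
    using matrix_vector_mul_linear by blast
  then have "norm (transpose Q *v v) = 1"
    using assms(2) orthogonal_transformation_norm by metis
  then show ?thesis
    using component_le_norm_cart[of "transpose Q *v v" b] by simp
qed

lemma SO_row_sign_flip:
  assumes "CARD('d) \<ge> 2"
  obtains D :: "real^'d^'d" where "D \<in> SO" "\<And>(B :: real^'d^'d) j. (D ** B) $ b $ j = - B $ b $ j"
proof -
  obtain b' :: 'd where "b' \<noteq> b"
    using assms by (metis card_le_Suc0_iff_eq finite not_less_eq_eq numeral_2_eq_2)
  define s :: "'d \<Rightarrow> real" where "s i = (if i = b \<or> i = b' then -1 else 1)" for i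
  define D :: "real^'d^'d" where "D = (\<chi> i j. if i = j then s i else 0)"
  have D_mult: "(D ** B) $ i $ j = s i * B $ i $ j" for B :: "real^'d^'d" and i j
  proof -
    have "(D ** B) $ i $ j = (\<Sum>l\<in>UNIV. (if i = l then s i else 0) * B $ l $ j)"
      unfolding matrix_matrix_mult_def D_def by simp
    also have "\<dots> = (\<Sum>l\<in>UNIV. if i = l then s i * B $ i $ j else 0)"
      by (rule sum.cong) auto
    finally show ?thesis by simp
  qed
  have "transpose D = D"
    by (simp add: D_def transpose_def vec_eq_iff)
  moreover have "D ** D = mat 1"
    by (simp add: vec_eq_iff D_mult) (simp add: D_def mat_def s_def)
  ultimately have "orthogonal_matrix D"
    unfolding orthogonal_matrix by simp
  moreover have "det D = 1"
  proof -
    have "det D = (\<Prod>i\<in>UNIV. if i \<in> {b, b'} then -1 else 1)"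
      by (subst det_diagonal) (simp_all add: D_def s_def)
    also have "\<dots> = (\<Prod>i\<in>{b, b'}. -1)"
      by (rule prod.mono_neutral_cong_right) auto
    finally show ?thesis using \<open>b' \<noteq> b\<close> by simp
  qed
  ultimately show ?thesis
    using that[of D] by (simp add: SO_def D_mult s_def)
qed

lemma SO_haar_integral_entry:
  fixes \<mu> :: "(real^'d^'d) measure"
  assumes "CARD('d) \<ge> 2" and haar: "SO_haar \<mu>"
  shows "(\<integral>B. B $ b $ a \<partial>\<mu>) = 0"
proof -
  obtain D :: "real^'d^'d" where D: "D \<in> SO" and flip: "\<And>(B :: real^'d^'d) j. (D ** B) $ b $ j = - B $ b $ j"
    using SO_row_sign_flip[OF assms(1)] by blast
  have sets: "sets \<mu> = sets borel" and inv: "distr \<mu> borel (\<lambda>B. D ** B) = \<mu>"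
    using haar D unfolding SO_haar_def by blast+
  have D_meas: "(\<lambda>B. D ** B) \<in> measurable \<mu> borel"
    by (subst measurable_cong_sets[OF sets refl]) measurable
  have "(\<integral>B. B $ b $ a \<partial>\<mu>) = (\<integral>B. B $ b $ a \<partial>distr \<mu> borel (\<lambda>B. D ** B))"
    by (simp only: inv)
  also have "\<dots> = (\<integral>B. (D ** B) $ b $ a \<partial>\<mu>)"
    by (rule integral_distr[OF D_meas]) measurable
  finally show ?thesis by (simp add: flip)
qed

lemma sets_SO:
  fixes \<mu> :: "(real^'d^'d) measure"
  assumes "SO_haar \<mu>"
  shows "(SO :: (real^'d^'d) set) \<in> sets borel"
  using assms emeasure_notin_sets[of SO \<mu>] unfolding SO_haar_def by fastforce

lemma (in prob_space) integral_indep_var_iterated: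
  fixes f :: "'c \<times> 'c \<Rightarrow> real"
  assumes ind: "indep_var S Z T Y" and f[measurable]: "f \<in> borel_measurable (S \<Otimes>\<^sub>M T)"
    and bound: "\<And>p. p \<in> space (S \<Otimes>\<^sub>M T) \<Longrightarrow> \<bar>f p\<bar> \<le> C"
  shows "(\<integral>\<omega>. f (Z \<omega>, Y \<omega>) \<partial>M) = (\<integral>\<omega>. (\<integral>y. f (Z \<omega>, y) \<partial>distr M T Y) \<partial>M)"
proof -
  have [measurable]: "Z \<in> measurable M S" "Y \<in> measurable M T"
    and joint: "distr M S Z \<Otimes>\<^sub>M distr M T Y = distr M (S \<Otimes>\<^sub>M T) (\<lambda>x. (Z x, Y x))"
    using ind unfolding indep_var_distribution_eq by auto
  interpret Z: prob_space "distr M S Z" by (rule prob_space_distr) simp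
  interpret Y: prob_space "distr M T Y" by (rule prob_space_distr) simp
  interpret ZY: pair_prob_space "distr M S Z" "distr M T Y" ..
  have sets_ZY: "sets (distr M S Z \<Otimes>\<^sub>M distr M T Y) = sets (S \<Otimes>\<^sub>M T)"
    by (intro sets_pair_measure_cong sets_distr)
  have "integrable (distr M S Z \<Otimes>\<^sub>M distr M T Y) f"
    by (rule ZY.integrable_const_bound[where B=C])
       (auto intro!: AE_I2 bound simp: space_pair_measure measurable_cong_sets[OF sets_ZY refl])
  then have "(\<integral>z. (\<integral>y. f (z, y) \<partial>distr M T Y) \<partial>distr M S Z) = integral\<^sup>L (distr M (S \<Otimes>\<^sub>M T) (\<lambda>x. (Z x, Y x))) f"
    unfolding joint[symmetric] by (rule ZY.integral_fst')
  also have "\<dots> = (\<integral>\<omega>. f (Z \<omega>, Y \<omega>) \<partial>M)"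
    by (rule integral_distr) measurable
  moreover have "(\<lambda>z. \<integral>y. f (z, y) \<partial>distr M T Y) \<in> borel_measurable S"
    by (rule Y.borel_measurable_lebesgue_integral)
       (simp add: measurable_cong_sets[OF sets_pair_measure_cong[OF refl sets_distr] refl])
  ultimately show ?thesis
    by (simp add: integral_distr)
qed

lemma integral_eq_0_countable_partition:
  fixes P :: "'i::countable \<Rightarrow> 'a \<Rightarrow> bool" and f :: "'a \<Rightarrow> real"
  assumes f: "integrable M f" and P[measurable]: "\<And>i. Measurable.pred M (P i)"
    and disjoint: "\<And>i j w. P i w \<Longrightarrow> P j w \<Longrightarrow> i = j"
    and cover: "AE w in M. \<exists>i. P i w"
    and zero: "\<And>i. (\<integral>w. (if P i w then f w else 0) \<partial>M) = 0"
  shows "integral\<^sup>L M f = 0"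
proof -
  define D where "D n = {w \<in> space M. P (from_nat n) w \<and> to_nat (from_nat n :: 'i) = n}" for n
  have [measurable]: "D n \<in> sets M" for n
    unfolding D_def by measurable
  have D_disjoint: "D m \<inter> D n = {}" if "m \<noteq> n" for m n
    using that disjoint by (auto simp: D_def) metis
  have "integral\<^sup>L M f = (LINT w:(\<Union>n. D n)|M. f w)"
    unfolding set_lebesgue_integral_def
  proof (rule integral_cong_AE)
    show "AE w in M. f w = indicator (\<Union>n. D n) w *\<^sub>R f w"
      using cover AE_space
    proof eventually_elim
      case (elim w)
      then obtain i where "P i w" by blast
      then have "w \<in> D (to_nat i)"
        using elim by (simp add: D_def)
      then show ?case by (auto simp: indicator_def)
    qed
  qed (use f in auto)
  also have "\<dots> = (\<Sum>n. LINT w:D n|M. f w)"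
  proof (rule lebesgue_integral_countable_add)
    show "set_integrable M (\<Union>n. D n) f"
      unfolding set_integrable_def by (rule integrable_mult_indicator) (use f in auto)
  qed (use D_disjoint in auto)
  also have "\<dots> = (\<Sum>n. 0)"
  proof (intro arg_cong[where f=suminf] ext)
    fix n
    have "(LINT w:D n|M. f w) = (\<integral>w. (if to_nat (from_nat n :: 'i) = n \<and> P (from_nat n) w then f w else 0) \<partial>M)"
      unfolding set_lebesgue_integral_def
      by (rule Bochner_Integration.integral_cong) (auto simp: D_def indicator_def)
    then show "(LINT w:D n|M. f w) = 0"
      using zero[of "from_nat n"] by (cases "to_nat (from_nat n :: 'i) = n") simp_all
  qed
  finally show ?thesis by simp
qed

lemma (in prob_space) real_cond_exp_vimage_algebra_charact:
  assumes X[measurable]: "X \<in> measurable M N"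
    and f: "integrable M f" and h[measurable]: "h \<in> borel_measurable N"
    and hX: "integrable M (\<lambda>w. h (X w))"
    and eq: "\<And>A. A \<in> sets N \<Longrightarrow>
      (\<integral>w. indicator A (X w) * f w \<partial>M) = (\<integral>w. indicator A (X w) * h (X w) \<partial>M)"
  shows "AE w in M. real_cond_exp M (vimage_algebra (space M) X N) f w = h (X w)"
proof -
  let ?F = "vimage_algebra (space M) X N"
  have sets_F: "sets ?F = {X -` A \<inter> space M | A. A \<in> sets N}"
    using measurable_space[OF X] by (intro sets_vimage_algebra2) auto
  have "subalgebra M ?F"
    unfolding subalgebra_def sets_F using measurable_sets[OF X] by auto
  then interpret F: finite_measure_subalgebra M ?F
    by unfold_locales
  show ?thesis
  proof (rule F.real_cond_exp_charact)
    fix B assume "B \<in> sets ?F"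
    then obtain A where A: "A \<in> sets N" "B = X -` A \<inter> space M"
      unfolding sets_F by blast
    have indicator_B: "indicator B w = (indicator A (X w) :: real)" if "w \<in> space M" for w
      using that by (simp add: A(2) indicator_def)
    show "(\<integral>w\<in>B. f w \<partial>M) = (\<integral>w\<in>B. h (X w) \<partial>M)"
      unfolding set_lebesgue_integral_def
      using eq[OF A(1)] by (simp add: indicator_B cong: Bochner_Integration.integral_cong)
  next
    have "X \<in> measurable ?F N"
      using measurable_space[OF X] by (intro measurable_vimage_algebra1) auto
    then show "(\<lambda>w. h (X w)) \<in> borel_measurable ?F"
      by measurable
  qed (use f hX in auto)
qed

section \<open>Arrival times and products of rotations\<close>

lemma arrival_0[simp]: "arrival e k 0 w = 0"
  by (simp add: arrival_def)

lemma arrival_Suc: "arrival e k (Suc n) w = arrival e k n w + e k n w"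
  by (simp add: arrival_def)

lemma arrival_strict_mono:
  assumes pos: "\<forall>n. e k n w > 0" and "m < n"
  shows "arrival e k m w < arrival e k n w"
  using \<open>m < n\<close>
proof (induction n)
  case (Suc n)
  then show ?case
    using pos by (cases "m = n") (auto simp: arrival_Suc intro: less_trans)
qed simp

lemma arrival_mono:
  assumes "\<forall>n. e k n w > 0" and "m \<le> n"
  shows "arrival e k m w \<le> arrival e k n w"
  using arrival_strict_mono[of e k w m n] assms by (cases "m = n") auto

lemma jumps_eqI:
  assumes pos: "\<forall>n. e k n w > 0" and "arrival e k j w \<le> s" "s < arrival e k (Suc j) w"
  shows "jumps e k s w = j"
proof -
  have "{n. 1 \<le> n \<and> arrival e k n w \<le> s} = {1..j}"
  proof (intro set_eqI iffI)
    fix n assume n: "n \<in> {n. 1 \<le> n \<and> arrival e k n w \<le> s}"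
    then have "\<not> Suc j \<le> n"
      using arrival_mono[of e k w "Suc j" n] pos assms(3) by auto
    then show "n \<in> {1..j}" using n by auto
  qed (use arrival_mono[of e k w _ j] pos assms(2) in \<open>auto intro: order_trans\<close>)
  then show ?thesis by (simp add: jumps_def)
qed

lemma arrival_bracket:
  assumes "0 \<le> s" "s < arrival e k n w"
  shows "\<exists>j. arrival e k j w \<le> s \<and> s < arrival e k (Suc j) w"
  using assms(2)
proof (induction n)
  case (Suc n)
  then show ?case
    by (cases "s < arrival e k n w") (auto simp: not_less)
qed (use assms(1) in simp)

lemma le_jumps:
  assumes pos: "\<forall>n. e k n w > 0" and "arrival e k n w \<le> s" "s < arrival e k N w"
  shows "n \<le> jumps e k s w"
proof -
  have "0 \<le> s"
    using arrival_mono[of e k w 0 n] pos assms(2) by simp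
  then obtain j where j: "arrival e k j w \<le> s" "s < arrival e k (Suc j) w"
    using arrival_bracket[OF _ assms(3)] by blast
  have "n < Suc j"
  proof (rule ccontr)
    assume "\<not> n < Suc j"
    then have "arrival e k (Suc j) w \<le> arrival e k n w"
      using pos by (intro arrival_mono) auto
    then show False
      using assms(2) j(2) by simp
  qed
  then show ?thesis
    using jumps_eqI[OF pos j] by simp
qed

lemma arrival_1_le_tau: "arrival e k 1 w \<le> tau e w"
  unfolding tau_def by (rule Max_ge) auto

fun gprod_between :: "('k \<Rightarrow> nat \<Rightarrow> 'w \<Rightarrow> real^'d^'d) \<Rightarrow> 'k \<Rightarrow> nat \<Rightarrow> nat \<Rightarrow> 'w \<Rightarrow> real^'d^'d" where
  "gprod_between g k a 0 w = mat 1"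
| "gprod_between g k a (Suc b) w = (if a \<le> b then g k b w ** gprod_between g k a b w else mat 1)"

lemma gprod_split:
  "a \<le> b \<Longrightarrow> gprod g k b w = gprod_between g k a b w ** gprod g k a w"
proof (induction b)
  case (Suc b)
  show ?case
  proof (cases "a = Suc b")
    case True
    have "gprod_between g k (Suc b) b w = mat 1" by (cases b) auto
    then show ?thesis using True by (simp add: matrix_mul_lid)
  next
    case False
    then show ?thesis using Suc by (simp add: matrix_mul_assoc)
  qed
qed simp

lemma gprod_SO: "(\<And>j. j < n \<Longrightarrow> g k j w \<in> SO) \<Longrightarrow> gprod g k n w \<in> SO"
  by (induction n) (auto intro: SO_mult SO_id)

lemma gprod_between_SO:
  "(\<And>j. a \<le> j \<Longrightarrow> j < b \<Longrightarrow> g k j w \<in> SO) \<Longrightarrow> gprod_between g k a b w \<in> SO"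
  by (induction b) (auto intro: SO_mult SO_id)

lemma gprod_cong: "(\<And>j. j < n \<Longrightarrow> g k j w = g' k j w') \<Longrightarrow> gprod g k n w = gprod g' k n w'"
  by (induction n) auto

lemma gprod_between_cong:
  "(\<And>j. a \<le> j \<Longrightarrow> j < b \<Longrightarrow> g k j w = g' k j w') \<Longrightarrow>
    gprod_between g k a b w = gprod_between g' k a b w'"
  by (induction b) auto

lemma psi_cong:
  assumes "\<And>k n. e k n w = e' k n w'" "\<And>k n. g k n w = g' k n w'"
  shows "psi e g nhat t w = psi e' g' nhat t w'"
proof -
  have arrival: "arrival e k n w = arrival e' k n w'" for k n
    by (simp add: arrival_def assms)
  then have "tau e w = tau e' w'" "jumps e k s w = jumps e' k s w'" for k s
    by (simp_all add: tau_def jumps_def)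
  then show ?thesis
    unfolding psi_def phi_def by (simp add: gprod_cong[of _ g k w g' w' for k] assms)
qed

context
  fixes N :: "'w measure" and e :: "'k::finite \<Rightarrow> nat \<Rightarrow> 'w \<Rightarrow> real" and g :: "'k \<Rightarrow> nat \<Rightarrow> 'w \<Rightarrow> real^'d^'d"
  assumes e[measurable]: "\<And>k n. e k n \<in> borel_measurable N"
    and g[measurable]: "\<And>k n. g k n \<in> borel_measurable N"
begin

lemma borel_measurable_arrival[measurable]: "arrival e k n \<in> borel_measurable N"
  unfolding arrival_def by measurable

lemma borel_measurable_tau[measurable]: "tau e \<in> borel_measurable N"
  unfolding tau_def by measurable

lemma measurable_jumps[measurable]:
  assumes [measurable]: "s \<in> borel_measurable N"
  shows "(\<lambda>w. jumps e k (s w) w) \<in> measurable N (count_space UNIV)"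
  unfolding jumps_def by measurable

lemma borel_measurable_gprod_random[measurable]:
  assumes "J \<in> measurable N (count_space UNIV)"
  shows "(\<lambda>w. gprod g k (J w) w) \<in> borel_measurable N"
proof (rule measurable_compose_countable[OF _ assms])
  show "gprod g k n \<in> borel_measurable N" for n
    by (induction n) auto
qed

lemma borel_measurable_gprod_between_random[measurable]:
  assumes "J \<in> measurable N (count_space UNIV)"
  shows "(\<lambda>w. gprod_between g k a (J w) w) \<in> borel_measurable N"
proof (rule measurable_compose_countable[OF _ assms])
  show "gprod_between g k a n \<in> borel_measurable N" for n
    by (induction n) auto
qed

lemma borel_measurable_psi[measurable]: "psi e g nhat t \<in> borel_measurable N"
  unfolding psi_def phi_def
  by (intro borel_measurable_vec) (simp only: vec_lambda_beta, measurable)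

end

section \<open>The driving variables as one random coordinate vector\<close>

text \<open>The interarrival time \<open>e k n\<close> is stored as the scalar matrix at \<open>Inl (k, n)\<close> and the
  rotation \<open>g k n\<close> at \<open>Inr (k, n)\<close>, so that all driving variables become the coordinates of a
  single random element of one product of Borel spaces; \<open>time_coord\<close> reads the scalar off a diagonal
  entry.\<close>

type_synonym ('k, 'd) coord = "('k \<times> nat) + ('k \<times> nat) \<Rightarrow> real^'d^'d"

definition time_coord :: "'k \<Rightarrow> nat \<Rightarrow> ('k, 'd::finite) coord \<Rightarrow> real" where
  "time_coord k n x = x (Inl (k, n)) $ undefined $ undefined"

definition rot_coord :: "'k \<Rightarrow> nat \<Rightarrow> ('k, 'd::finite) coord \<Rightarrow> real^'d^'d" where
  "rot_coord k n x = x (Inr (k, n))"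

definition coords :: "('k \<Rightarrow> nat \<Rightarrow> 'w \<Rightarrow> real) \<Rightarrow> ('k \<Rightarrow> nat \<Rightarrow> 'w \<Rightarrow> real^'d^'d) \<Rightarrow> 'w \<Rightarrow> ('k, 'd) coord" where
  "coords e g w i = (case i of Inl (k, n) \<Rightarrow> e k n w *\<^sub>R mat 1 | Inr (k, n) \<Rightarrow> g k n w)"

abbreviation coord_space :: "('k, 'd::finite) coord measure" where
  "coord_space \<equiv> Pi\<^sub>M UNIV (\<lambda>_. borel)"

lemma time_coord_coords[simp]: "time_coord k n (coords e g w) = e k n w"
  by (simp add: time_coord_def coords_def mat_def)

lemma rot_coord_coords[simp]: "rot_coord k n (coords e g w) = g k n w"
  by (simp add: rot_coord_def coords_def)

lemma psi_coords: "psi e g nhat t w = psi time_coord rot_coord nhat t (coords e g w)"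
  by (rule psi_cong) simp_all

lemma borel_measurable_time_coord[measurable]:
  "Inl (k, n) \<in> I \<Longrightarrow> time_coord k n \<in> borel_measurable (Pi\<^sub>M I (\<lambda>_. borel))"
  unfolding time_coord_def by measurable

lemma borel_measurable_rot_coord[measurable]:
  "Inr (k, n) \<in> I \<Longrightarrow> rot_coord k n \<in> borel_measurable (Pi\<^sub>M I (\<lambda>_. borel))"
  unfolding rot_coord_def by measurable

locale rotation_process = prob_space M for M :: "'w measure" +
  fixes e :: "'k::finite \<Rightarrow> nat \<Rightarrow> 'w \<Rightarrow> real" and g :: "'k \<Rightarrow> nat \<Rightarrow> 'w \<Rightarrow> real^'d^'d"
    and nhat :: "real^'d" and lam :: real
  assumes card_ge_2: "CARD('d) \<ge> 2" and lam_pos: "lam > 0" and norm_nhat: "norm nhat = 1"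
    and e_exponential: "\<And>k n. distributed M lborel (e k n) (exponential_density lam)"
    and g_measurable[measurable]: "\<And>k n. g k n \<in> borel_measurable M"
    and g_haar: "\<And>k n. SO_haar (distr M borel (g k n))"
    and indep: "all_indep M e g"
begin

abbreviation X :: "'w \<Rightarrow> ('k, 'd) coord" where
  "X \<equiv> coords e g"

lemma e_measurable[measurable]: "e k n \<in> borel_measurable M"
  using distributed_measurable[OF e_exponential[of k n]] by simp

lemma borel_measurable_coord[measurable]: "(\<lambda>w. X w i) \<in> borel_measurable M"
  unfolding coords_def by (cases i) (auto split: prod.splits)

lemma measurable_X[measurable]: "X \<in> measurable M coord_space"
  by (rule measurable_PiM_single') auto

lemma indep_coords: "indep_vars (\<lambda>_. borel) (\<lambda>i w. X w i) UNIV"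
  unfolding indep_vars_def2
proof safe
  show "indep_sets (\<lambda>i. {(\<lambda>w. X w i) -` A \<inter> space M |A. A \<in> sets borel}) UNIV"
    using indep unfolding all_indep_def
  proof (rule indep_sets_mono_sets)
    fix i :: "('k \<times> nat) + ('k \<times> nat)"
    obtain k n where "i = Inl (k, n) \<or> i = Inr (k, n)"
      by (cases i) auto
    moreover have "\<exists>B\<in>sets borel. {w. e k n w *\<^sub>R (mat 1 :: real^'d^'d) \<in> A} \<inter> space M = {w. e k n w \<in> B} \<inter> space M"
      if "A \<in> sets borel" for A
    proof
      show "(\<lambda>r. r *\<^sub>R (mat 1 :: real^'d^'d)) -` A \<in> sets borel"
        using measurable_sets[OF _ that, of "\<lambda>r::real. r *\<^sub>R (mat 1 :: real^'d^'d)" borel] by simp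
    qed auto
    ultimately show "{(\<lambda>w. X w i) -` A \<inter> space M |A. A \<in> sets borel} \<subseteq> (case i of
        Inl (k, n) \<Rightarrow> {e k n -` A \<inter> space M | A. A \<in> sets (borel :: real measure)}
      | Inr (k, n) \<Rightarrow> {g k n -` A \<inter> space M | A. A \<in> sets (borel :: (real^'d^'d) measure)})"
      by (fastforce simp: coords_def vimage_def)
  qed
qed auto

lemma AE_interarrival_pos: "AE w in M. \<forall>k n. e k n w > 0"
proof -
  have "AE w in M. e k n w > 0" for k n
  proof -
    have "prob {w \<in> space M. 0 < e k n w} = 1"
      using exponential_distributedD_gt[OF e_exponential order_refl lam_pos] by simp
    from AE_prob_1[OF this] show ?thesis by eventually_elim simp
  qed
  then show ?thesis by (simp add: AE_all_countable)
qed

lemma AE_rotation_SO: "AE w in M. \<forall>k n. g k n w \<in> SO"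
proof -
  have "AE w in M. g k n w \<in> SO" for k n
  proof -
    have "emeasure M (g k n -` SO \<inter> space M) = 1"
      using g_haar[of k n] sets_SO[OF g_haar] by (simp add: SO_haar_def emeasure_distr)
    then have "prob (g k n -` SO \<inter> space M) = 1"
      by (simp add: emeasure_eq_measure)
    from AE_prob_1[OF this] show ?thesis by eventually_elim simp
  qed
  then show ?thesis by (simp add: AE_all_countable)
qed

lemma prob_interarrivals_le:
  assumes "n \<ge> 1" and c: "c \<ge> 0"
  shows "prob (\<Inter>j<n. e k j -` {..c} \<inter> space M) = (1 - exp (- c * lam)) ^ n"
proof -
  define A where "A i = (case i of Inl (k', j) \<Rightarrow> e k' j -` {..c} \<inter> space M | Inr _ \<Rightarrow> {})"
    for i :: "('k \<times> nat) + ('k \<times> nat)"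
  define J where "J = (\<lambda>j. Inl (k, j) :: ('k \<times> nat) + ('k \<times> nat)) ` {..<n}"
  have "prob (\<Inter>i\<in>J. A i) = (\<Prod>i\<in>J. prob (A i))"
  proof (rule indep_setsD[OF indep[unfolded all_indep_def]])
    show "J \<noteq> {}" "finite J"
      using assms by (auto simp: J_def lessThan_empty_iff)
  qed (auto simp: J_def A_def intro!: exI[of _ "{..c}"])
  moreover have "prob (e k j -` {..c} \<inter> space M) = 1 - exp (- c * lam)" for j
    using exponential_distributedD_le[OF e_exponential c lam_pos]
    by (simp add: vimage_def Int_def conj_commute)
  moreover have "inj_on (\<lambda>j. Inl (k, j) :: ('k \<times> nat) + ('k \<times> nat)) {..<n}"
    by (auto simp: inj_on_def)
  ultimately show ?thesis
    by (simp add: J_def A_def prod.reindex)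
qed

lemma AE_arrival_exceeds: "AE w in M. \<exists>n. arrival e k n w > real c"
proof -
  define q where "q = 1 - exp (- real c * lam)"
  have q: "0 \<le> q" "q < 1"
    using lam_pos by (auto simp: q_def)
  define B where "B = {w \<in> space M. (\<forall>n. arrival e k n w \<le> real c) \<and> (\<forall>n. e k n w > 0)}"
  have B_sets: "B \<in> sets M"
    unfolding B_def by measurable
  have "prob B \<le> q ^ n" if "n \<ge> 1" for n
  proof -
    have "e k j w \<le> real c" if "w \<in> B" for w j
      using that arrival_mono[of e k w 0 j] by (auto simp: B_def arrival_Suc dest!: spec[of _ "Suc j"])
    then have "B \<subseteq> (\<Inter>j<n. e k j -` {..real c} \<inter> space M)"
      by (auto simp: B_def)
    moreover have "{..<n} \<noteq> {}"
      using that by (auto simp: lessThan_empty_iff)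
    ultimately have "prob B \<le> prob (\<Inter>j<n. e k j -` {..real c} \<inter> space M)"
      by (intro finite_measure_mono) (auto intro!: sets.countable_INT')
    also have "\<dots> = q ^ n"
      using prob_interarrivals_le[OF that, of "real c" k] by (simp add: q_def)
    finally show ?thesis .
  qed
  then have "prob B \<le> 0"
    by (intro tendsto_le[OF trivial_limit_sequentially LIMSEQ_power_zero[of q] tendsto_const])
       (use q in \<open>auto simp: eventually_sequentially intro!: exI[of _ 1]\<close>)
  then have "B \<in> null_sets M"
    using B_sets by (simp add: measure_le_0_iff emeasure_eq_measure null_sets_def)
  then have "AE w in M. w \<notin> B"
    by (rule AE_not_in)
  then show ?thesis
    using AE_interarrival_pos AE_space by eventually_elim (auto simp: B_def not_le)
qed

lemma integral_resample_coord:
  fixes F :: "('k, 'd) coord \<Rightarrow> real"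
  assumes F[measurable]: "F \<in> borel_measurable coord_space" and bound: "\<And>x. \<bar>F x\<bar> \<le> C"
  shows "(\<integral>\<omega>. F (X \<omega>) \<partial>M) = (\<integral>\<omega>. (\<integral>\<omega>'. F ((X \<omega>)(i := X \<omega>' i)) \<partial>M) \<partial>M)"
proof -
  define K where "K = UNIV - {i}"
  define Z where "Z \<omega> = restrict (X \<omega>) K" for \<omega>
  define Y where "Y \<omega> = restrict (X \<omega>) {i}" for \<omega>
  have "indep_var (Pi\<^sub>M K (\<lambda>_. borel)) Z (Pi\<^sub>M {i} (\<lambda>_. borel)) Y"
    unfolding Z_def Y_def by (rule indep_var_restrict[OF indep_coords]) (auto simp: K_def)
  moreover
  define f where "f p = F ((fst p)(i := snd p i))" for p :: "('k, 'd) coord \<times> ('k, 'd) coord"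
  have f_measurable: "f \<in> borel_measurable (Pi\<^sub>M K (\<lambda>_. borel) \<Otimes>\<^sub>M Pi\<^sub>M {i} (\<lambda>_. borel))"
  proof -
    have "(\<lambda>p. (fst p)(i := snd p i)) \<in> measurable (Pi\<^sub>M K (\<lambda>_. borel) \<Otimes>\<^sub>M Pi\<^sub>M {i} (\<lambda>_. borel)) coord_space"
    proof (rule measurable_PiM_single')
      fix j :: "('k \<times> nat) + ('k \<times> nat)"
      show "(\<lambda>p. ((fst p)(i := snd p i)) j) \<in> borel_measurable (Pi\<^sub>M K (\<lambda>_. borel) \<Otimes>\<^sub>M Pi\<^sub>M {i} (\<lambda>_. borel))"
        by (cases "j = i") (simp_all add: K_def, measurable)
    qed simp
    from measurable_compose[OF this F] show ?thesis
      unfolding f_def by (simp add: comp_def)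
  qed
  ultimately have "(\<integral>\<omega>. f (Z \<omega>, Y \<omega>) \<partial>M) = (\<integral>\<omega>. (\<integral>y. f (Z \<omega>, y) \<partial>distr M (Pi\<^sub>M {i} (\<lambda>_. borel)) Y) \<partial>M)"
    by (rule integral_indep_var_iterated[where C=C]) (simp add: f_def bound)
  moreover have "(\<integral>y. f (Z \<omega>, y) \<partial>distr M (Pi\<^sub>M {i} (\<lambda>_. borel)) Y) = (\<integral>\<omega>'. f (Z \<omega>, Y \<omega>') \<partial>M)" for \<omega>
  proof (rule integral_distr)
    show "Y \<in> measurable M (Pi\<^sub>M {i} (\<lambda>_. borel))"
      unfolding Y_def by (rule measurable_restrict) simp
    show "(\<lambda>y. f (Z \<omega>, y)) \<in> borel_measurable (Pi\<^sub>M {i} (\<lambda>_. borel))"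
      by (rule measurable_Pair2[OF f_measurable]) (simp add: Z_def space_PiM)
  qed
  moreover have "(Z \<omega>)(i := Y \<omega>' i) = (X \<omega>)(i := X \<omega>' i)" for \<omega> \<omega>'
    by (auto simp: Z_def Y_def K_def)
  ultimately show ?thesis
    by (simp add: f_def)
qed

end

section \<open>Decomposition according to the jump counts at time tau\<close>

definition regular :: "('k::finite, 'd::finite) coord \<Rightarrow> bool" where
  "regular x \<longleftrightarrow> (\<forall>k n. time_coord k n x > 0) \<and> (\<forall>k n. rot_coord k n x \<in> SO) \<and>
     (\<forall>k (c::nat). \<exists>n. arrival time_coord k n x > real c)"

definition counts_at_tau :: "('k::finite \<Rightarrow> nat) \<Rightarrow> ('k, 'd::finite) coord \<Rightarrow> bool" where
  "counts_at_tau m x \<longleftrightarrow> (\<forall>k. arrival time_coord k (m k) x \<le> tau time_coord x \<and>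
     tau time_coord x < arrival time_coord k (Suc (m k)) x)"

text \<open>Unlike \<open>counts_at_tau m\<close>, this does not depend on the interarrival time
  \<open>time_coord k (m k)\<close> when \<open>m k \<ge> 1\<close>.\<close>

definition counts_at_tau_except :: "('k::finite \<Rightarrow> nat) \<Rightarrow> 'k \<Rightarrow> ('k, 'd::finite) coord \<Rightarrow> bool" where
  "counts_at_tau_except m k x \<longleftrightarrow>
     (\<forall>k'. k' \<noteq> k \<longrightarrow> arrival time_coord k' (m k') x \<le> tau time_coord x \<and>
        tau time_coord x < arrival time_coord k' (Suc (m k')) x) \<and>
     arrival time_coord k (m k) x \<le> tau time_coord x"

definition age :: "('k::finite \<Rightarrow> nat) \<Rightarrow> 'k \<Rightarrow> ('k, 'd::finite) coord \<Rightarrow> real" where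
  "age m k x = tau time_coord x - arrival time_coord k (m k) x"

definition psi_frozen :: "real^'d \<Rightarrow> ('k::finite \<Rightarrow> nat) \<Rightarrow> ('k, 'd::finite) coord \<Rightarrow> real^'d^'k" where
  "psi_frozen nhat m x = (\<chi> k. transpose (gprod rot_coord k (m k) x) *v nhat)"

text \<open>Truncation to \<open>[-1, 1]\<close> changes nothing on regular coordinates but makes all integrands below
  bounded everywhere.\<close>

definition clip :: "real \<Rightarrow> real" where
  "clip v = max (-1) (min 1 v)"

definition weighted_psi ::
    "real^'d \<Rightarrow> (real^'d^'k) set \<Rightarrow> 'k::finite \<Rightarrow> 'd \<Rightarrow> real \<Rightarrow> ('k, 'd::finite) coord \<Rightarrow> real" where
  "weighted_psi nhat A k i t x =
     indicator A (psi time_coord rot_coord nhat 0 x) * psi time_coord rot_coord nhat t x $ k $ i"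

definition frozen_term ::
    "real^'d \<Rightarrow> (real^'d^'k) set \<Rightarrow> ('k::finite \<Rightarrow> nat) \<Rightarrow> 'k \<Rightarrow> 'd \<Rightarrow> ('k, 'd::finite) coord \<Rightarrow> real" where
  "frozen_term nhat A m k i x = indicator A (psi_frozen nhat m x) * clip (psi_frozen nhat m x $ k $ i)"

definition no_jump_term ::
    "real^'d \<Rightarrow> (real^'d^'k) set \<Rightarrow> ('k::finite \<Rightarrow> nat) \<Rightarrow> 'k \<Rightarrow> 'd \<Rightarrow> real \<Rightarrow> ('k, 'd::finite) coord \<Rightarrow> real"
  where
  "no_jump_term nhat A m k i t x =
     (if counts_at_tau_except m k x \<and> time_coord k (m k) x > age m k x + t
      then frozen_term nhat A m k i x else 0)"

text \<open>Coefficient of the entry \<open>b, a\<close> of the rotation \<open>rot_coord k (m k)\<close>, the first one applied to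
  particle \<open>k\<close> after \<open>tau\<close>, in the expansion of \<open>psi t\<close> when that particle jumps in
  \<open>(tau, tau + t]\<close>. It does not depend on that rotation.\<close>

definition jump_coeff :: "real^'d \<Rightarrow> (real^'d^'k) set \<Rightarrow> ('k::finite \<Rightarrow> nat) \<Rightarrow> 'k \<Rightarrow> 'd \<Rightarrow> real \<Rightarrow>
    'd \<Rightarrow> 'd \<Rightarrow> ('k, 'd::finite) coord \<Rightarrow> real" where
  "jump_coeff nhat A m k i t a b x =
     (if counts_at_tau m x \<and> \<not> tau time_coord x + t < arrival time_coord k (Suc (m k)) x
      then indicator A (psi_frozen nhat m x) * clip (gprod rot_coord k (m k) x $ a $ i) *
        clip ((transpose (gprod_between rot_coord k (Suc (m k))
          (jumps time_coord k (t + tau time_coord x) x) x) *v nhat) $ b)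
      else 0)"

lemma clip_eq: "\<bar>v\<bar> \<le> 1 \<Longrightarrow> clip v = v"
  by (auto simp: clip_def)

lemma abs_clip_le: "\<bar>clip v\<bar> \<le> 1"
  by (auto simp: clip_def)

lemma borel_measurable_clip[measurable]: "clip \<in> borel_measurable borel"
  unfolding clip_def by measurable

lemma regularD:
  assumes "regular x"
  shows "\<forall>n. time_coord k n x > 0" "rot_coord k n x \<in> SO" "\<exists>n. s < arrival time_coord k n x"
proof -
  obtain c :: nat where "s < real c"
    using reals_Archimedean2 by blast
  moreover obtain n where "real c < arrival time_coord k n x"
    using assms unfolding regular_def by blast
  ultimately show "\<exists>n. s < arrival time_coord k n x"
    by (intro exI[of _ n]) simp
qed (use assms in \<open>simp_all add: regular_def\<close>)

lemma tau_pos: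
  assumes "regular x"
  shows "tau time_coord x > 0"
proof -
  have "0 < arrival time_coord k 1 x"
    using regularD(1)[OF assms] by (simp add: arrival_def)
  then show ?thesis
    using arrival_1_le_tau by (rule less_le_trans)
qed

lemma counts_at_tau_exists:
  assumes "regular x"
  shows "\<exists>m. counts_at_tau m x"
proof -
  have "\<exists>j. arrival time_coord k j x \<le> tau time_coord x \<and> tau time_coord x < arrival time_coord k (Suc j) x" for k
  proof -
    obtain n where "tau time_coord x < arrival time_coord k n x"
      using regularD(3)[OF assms] by blast
    then show ?thesis
      by (rule arrival_bracket[rotated]) (use tau_pos[OF assms] in simp)
  qed
  then show ?thesis
    unfolding counts_at_tau_def by metis
qed

lemma counts_at_tau_jumps:
  "regular x \<Longrightarrow> counts_at_tau m x \<Longrightarrow> jumps time_coord k (tau time_coord x) x = m k"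
  by (intro jumps_eqI) (auto simp: regularD counts_at_tau_def)

lemma counts_at_tau_unique: "regular x \<Longrightarrow> counts_at_tau m x \<Longrightarrow> counts_at_tau m' x \<Longrightarrow> m = m'"
  using counts_at_tau_jumps by (metis ext)

lemma psi_0_eq_psi_frozen:
  "regular x \<Longrightarrow> counts_at_tau m x \<Longrightarrow> psi time_coord rot_coord nhat 0 x = psi_frozen nhat m x"
  by (simp add: counts_at_tau_jumps psi_def psi_frozen_def phi_def)

lemma psi_eq_psi_frozen_no_jump:
  assumes "regular x" "counts_at_tau m x" "0 \<le> t" "tau time_coord x + t < arrival time_coord k (Suc (m k)) x"
  shows "psi time_coord rot_coord nhat t x $ k = psi_frozen nhat m x $ k"
proof -
  have "arrival time_coord k (m k) x \<le> t + tau time_coord x"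
    using assms(2,3) by (auto simp: counts_at_tau_def intro: order_trans)
  then have "jumps time_coord k (t + tau time_coord x) x = m k"
    using assms(1,4) by (intro jumps_eqI) (auto simp: regularD)
  then show ?thesis
    by (simp add: psi_def psi_frozen_def phi_def)
qed

lemma transpose_mult_vector_component:
  fixes R G Q :: "real^'d^'d"
  shows "(transpose (R ** (G ** Q)) *v v) $ i =
    (\<Sum>a\<in>UNIV. \<Sum>b\<in>UNIV. (Q $ a $ i * (transpose R *v v) $ b) * G $ b $ a)"
proof -
  define u where "u = transpose R *v v"
  have "transpose (R ** (G ** Q)) *v v = transpose Q *v (transpose G *v u)"
    unfolding u_def matrix_transpose_mul by (simp only: matrix_vector_mul_assoc matrix_mul_assoc)
  also have "\<dots> $ i = (\<Sum>a\<in>UNIV. Q $ a $ i * (\<Sum>b\<in>UNIV. G $ b $ a * u $ b))"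
    unfolding matrix_vector_mult_def transpose_def by simp
  also have "\<dots> = (\<Sum>a\<in>UNIV. \<Sum>b\<in>UNIV. (Q $ a $ i * u $ b) * G $ b $ a)"
    by (simp add: sum_distrib_left mult_ac)
  finally show ?thesis
    by (simp add: u_def)
qed

lemma psi_jump_expansion:
  assumes "regular x" "counts_at_tau m x" "\<not> tau time_coord x + t < arrival time_coord k (Suc (m k)) x"
  defines "J \<equiv> jumps time_coord k (t + tau time_coord x) x"
  shows "psi time_coord rot_coord nhat t x $ k $ i = (\<Sum>a\<in>UNIV. \<Sum>b\<in>UNIV.
       (gprod rot_coord k (m k) x $ a $ i * (transpose (gprod_between rot_coord k (Suc (m k)) J x) *v nhat) $ b)
       * rot_coord k (m k) x $ b $ a)"
proof -
  obtain N where N: "t + tau time_coord x < arrival time_coord k N x"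
    using regularD(3)[OF assms(1)] by blast
  have "arrival time_coord k (Suc (m k)) x \<le> t + tau time_coord x"
    using assms(3) by (simp add: not_less add.commute)
  then have "Suc (m k) \<le> J"
    unfolding J_def using le_jumps[OF regularD(1)[OF assms(1)] _ N] by blast
  then have "gprod rot_coord k J x =
      gprod_between rot_coord k (Suc (m k)) J x ** (rot_coord k (m k) x ** gprod rot_coord k (m k) x)"
    using gprod_split[of "Suc (m k)" J rot_coord k x] by simp
  then show ?thesis
    unfolding psi_def phi_def vec_lambda_beta J_def[symmetric] by (simp only: transpose_mult_vector_component)
qed

lemma counts_at_tau_no_jump_iff:
  assumes "0 \<le> t"
  shows "counts_at_tau m x \<and> tau time_coord x + t < arrival time_coord k (Suc (m k)) x \<longleftrightarrow>
    counts_at_tau_except m k x \<and> time_coord k (m k) x > age m k x + t"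
proof -
  have "tau time_coord x + t < arrival time_coord k (Suc (m k)) x \<longleftrightarrow> time_coord k (m k) x > age m k x + t"
    by (auto simp: age_def arrival_Suc)
  then show ?thesis
    using assms unfolding counts_at_tau_def counts_at_tau_except_def by (smt (verit))
qed

lemma weighted_psi_decomposition:
  assumes x: "regular x" and nhat: "norm nhat = 1" and t: "0 \<le> t"
  shows "(if counts_at_tau m x then weighted_psi nhat A k i t x else 0) =
    no_jump_term nhat A m k i t x +
    (\<Sum>a\<in>UNIV. \<Sum>b\<in>UNIV. jump_coeff nhat A m k i t a b x * clip (rot_coord k (m k) x $ b $ a))"
proof (cases "counts_at_tau m x \<and> tau time_coord x + t < arrival time_coord k (Suc (m k)) x")
  case True
  have "gprod rot_coord k' n x \<in> SO" for k' n
    by (rule gprod_SO) (rule regularD(2)[OF x])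
  then have "\<bar>psi_frozen nhat m x $ k $ i\<bar> \<le> 1"
    unfolding psi_frozen_def using SO_transpose_unit_vector_bound[OF _ nhat] by simp
  moreover have "psi time_coord rot_coord nhat t x $ k = psi_frozen nhat m x $ k"
    using True by (intro psi_eq_psi_frozen_no_jump[OF x _ t]) simp_all
  ultimately have "weighted_psi nhat A k i t x = frozen_term nhat A m k i x"
    using True psi_0_eq_psi_frozen[OF x, of m] by (simp add: weighted_psi_def frozen_term_def clip_eq)
  moreover have "counts_at_tau_except m k x \<and> time_coord k (m k) x > age m k x + t"
    using True counts_at_tau_no_jump_iff[OF t] by blast
  ultimately show ?thesis
    using True by (simp add: no_jump_term_def jump_coeff_def)
next
  case no_stay: False
  then have "\<not> (counts_at_tau_except m k x \<and> time_coord k (m k) x > age m k x + t)"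
    using counts_at_tau_no_jump_iff[OF t] by blast
  then have no_jump_0: "no_jump_term nhat A m k i t x = 0"
    unfolding no_jump_term_def by (rule if_not_P)
  show ?thesis
  proof (cases "counts_at_tau m x")
    case counts: True
    let ?J = "jumps time_coord k (t + tau time_coord x) x"
    let ?v = "transpose (gprod_between rot_coord k (Suc (m k)) ?J x) *v nhat"
    have "\<bar>gprod rot_coord k (m k) x $ a $ i\<bar> \<le> 1" for a
      by (intro SO_entry_bound gprod_SO regularD(2)[OF x])
    moreover have "\<bar>?v $ b\<bar> \<le> 1" for b
      by (intro SO_transpose_unit_vector_bound[OF _ nhat] gprod_between_SO regularD(2)[OF x])
    ultimately
    have "jump_coeff nhat A m k i t a b x * clip (rot_coord k (m k) x $ b $ a) =
        indicator A (psi_frozen nhat m x) *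
        ((gprod rot_coord k (m k) x $ a $ i * ?v $ b) * rot_coord k (m k) x $ b $ a)" for a b
      using counts no_stay SO_entry_bound[OF regularD(2)[OF x]]
      by (simp add: jump_coeff_def clip_eq)
    then show ?thesis
      using counts no_stay no_jump_0 psi_0_eq_psi_frozen[OF x counts]
      by (simp add: weighted_psi_def psi_jump_expansion[OF x] sum_distrib_left)
  next
    case False
    then show ?thesis
      using no_jump_0 by (simp add: jump_coeff_def)
  qed
qed

lemma borel_measurable_time_coord_space[measurable]: "time_coord k n \<in> borel_measurable coord_space"
  by simp

lemma borel_measurable_rot_coord_space[measurable]: "rot_coord k n \<in> borel_measurable coord_space"
  by simp




lemma pred_arrival_le_tau[measurable]:
  "Measurable.pred coord_space (\<lambda>x. arrival time_coord k n x \<le> tau time_coord x)"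
  unfolding pred_def by (rule borel_measurable_le) measurable

lemma pred_tau_less_arrival[measurable]:
  "Measurable.pred coord_space (\<lambda>x. tau time_coord x < arrival time_coord k n x)"
  unfolding pred_def by (rule borel_measurable_less) measurable

lemma borel_measurable_psi_frozen[measurable]: "psi_frozen nhat m \<in> borel_measurable coord_space"
  unfolding psi_frozen_def
  by (intro borel_measurable_vec) (simp only: vec_lambda_beta, measurable)

lemma pred_counts_at_tau[measurable]: "Measurable.pred coord_space (counts_at_tau m)"
  unfolding counts_at_tau_def by measurable

lemma pred_counts_at_tau_except[measurable]: "Measurable.pred coord_space (counts_at_tau_except m k)"
  unfolding counts_at_tau_except_def by measurable

lemma borel_measurable_age[measurable]: "age m k \<in> borel_measurable coord_space"
  unfolding age_def by measurable

lemma pred_regular[measurable]: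
  assumes "(SO :: (real^'d^'d) set) \<in> sets borel"
  shows "Measurable.pred (coord_space :: ('k::finite, 'd::finite) coord measure) regular"
proof -
  have [measurable]: "Measurable.pred (coord_space :: ('k, 'd) coord measure) (\<lambda>x. rot_coord k n x \<in> SO)" for k n
    using assms by measurable
  have [measurable]: "Measurable.pred (coord_space :: ('k, 'd) coord measure) (\<lambda>x. real c < arrival time_coord k n x)" for k n c
    unfolding pred_def by (rule borel_measurable_less) measurable
  show ?thesis
    unfolding regular_def by measurable
qed

context
  fixes A :: "(real^'d::finite^'k::finite) set"
  assumes A[measurable]: "A \<in> sets borel"
begin

lemma borel_measurable_weighted_psi[measurable]: "weighted_psi nhat A k i t \<in> borel_measurable coord_space"
  unfolding weighted_psi_def by measurable

lemma borel_measurable_no_jump_term[measurable]: "no_jump_term nhat A m k i t \<in> borel_measurable coord_space"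
  unfolding no_jump_term_def frozen_term_def by measurable

lemma borel_measurable_jump_coeff[measurable]: "jump_coeff nhat A m k i t a b \<in> borel_measurable coord_space"
  unfolding jump_coeff_def by measurable

end

lemma abs_psi_le:
  assumes "regular x" "norm nhat = 1"
  shows "\<bar>psi time_coord rot_coord nhat t x $ k $ i\<bar> \<le> 1"
proof -
  have "gprod rot_coord k n x \<in> SO" for n
    by (intro gprod_SO regularD(2)[OF assms(1)])
  then show ?thesis
    using SO_transpose_unit_vector_bound[OF _ assms(2)] by (simp add: psi_def phi_def)
qed

lemma abs_weighted_psi_le: "regular x \<Longrightarrow> norm nhat = 1 \<Longrightarrow> \<bar>weighted_psi nhat A k i t x\<bar> \<le> 1"
  using abs_psi_le[of x nhat t k i] by (simp add: weighted_psi_def indicator_def)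

lemma abs_no_jump_term_le: "\<bar>no_jump_term nhat A m k i t x\<bar> \<le> 1"
  using abs_clip_le by (simp add: no_jump_term_def frozen_term_def indicator_def)

lemma abs_jump_summand_le: "\<bar>jump_coeff nhat A m k i t a b x * clip v\<bar> \<le> 1"
proof -
  have "\<bar>clip u * clip v\<bar> \<le> 1" for u v
    using abs_clip_le[of u] abs_clip_le[of v] by (simp add: abs_mult mult_le_one)
  then show ?thesis
    using abs_clip_le[of v] by (simp add: jump_coeff_def indicator_def abs_mult mult_le_one)
qed

lemma time_coord_fun_upd_Inr[simp]: "time_coord k n (x(Inr p := v)) = time_coord k n x"
  by (simp add: time_coord_def)

lemma rot_coord_fun_upd_Inl[simp]: "rot_coord k n (x(Inl p := v)) = rot_coord k n x"
  by (simp add: rot_coord_def)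

lemma time_coord_fun_upd_Inl: "time_coord k n (x(Inl (k', n') := v)) =
    (if k = k' \<and> n = n' then v $ undefined $ undefined else time_coord k n x)"
  by (auto simp: time_coord_def)

lemma jump_coeff_fun_upd: "jump_coeff nhat A m k i t a b (x(Inr (k, m k) := v)) = jump_coeff nhat A m k i t a b x"
proof -
  let ?y = "x(Inr (k, m k) := v)"
  have time: "arrival time_coord k' n ?y = arrival time_coord k' n x" "tau time_coord ?y = tau time_coord x"
    "jumps time_coord k' s ?y = jumps time_coord k' s x" "counts_at_tau m ?y = counts_at_tau m x" for k' n s
    by (simp_all add: arrival_def tau_def jumps_def counts_at_tau_def)
  have gprod: "gprod rot_coord k' (m k') ?y = gprod rot_coord k' (m k') x" for k'
    by (rule gprod_cong) (auto simp: rot_coord_def)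
  then have "psi_frozen nhat m ?y = psi_frozen nhat m x"
    by (simp add: psi_frozen_def)
  moreover have "gprod_between rot_coord k (Suc (m k)) J ?y = gprod_between rot_coord k (Suc (m k)) J x" for J
    by (rule gprod_between_cong) (auto simp: rot_coord_def)
  ultimately show ?thesis
    unfolding jump_coeff_def time gprod by simp
qed

text \<open>The hypothesis \<open>m k \<ge> 1\<close> is needed because \<open>tau\<close> involves the first interarrival times.\<close>

lemma no_jump_term_fun_upd:
  assumes "m k \<ge> 1"
  shows "no_jump_term nhat A m k i t (x(Inl (k, m k) := v)) =
    (if counts_at_tau_except m k x \<and> v $ undefined $ undefined > age m k x + t then frozen_term nhat A m k i x else 0)"
proof -
  let ?y = "x(Inl (k, m k) := v)"
  have arrival: "arrival time_coord k' n ?y = arrival time_coord k' n x" if "k' \<noteq> k \<or> n \<le> m k" for k' n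
    unfolding arrival_def using that by (intro sum.cong) (auto simp: time_coord_fun_upd_Inl)
  have tau: "tau time_coord ?y = tau time_coord x"
    unfolding tau_def using arrival[of _ 1] assms by (metis One_nat_def)
  have "counts_at_tau_except m k ?y = counts_at_tau_except m k x" "age m k ?y = age m k x"
    by (simp_all add: counts_at_tau_except_def age_def arrival tau)
  moreover have "frozen_term nhat A m k i ?y = frozen_term nhat A m k i x"
    by (simp add: frozen_term_def psi_frozen_def gprod_cong[of _ _ k' ?y _ x for k'])
  ultimately show ?thesis
    by (simp add: no_jump_term_def time_coord_fun_upd_Inl)
qed

lemma no_jump_term_0:
  assumes "m k = 0" "0 \<le> t"
  shows "no_jump_term nhat A m k i t x = 0"
proof -
  have "time_coord k 0 x \<le> tau time_coord x"
    using arrival_1_le_tau[of time_coord k x] by (simp add: arrival_def)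
  then show ?thesis
    using assms by (simp add: no_jump_term_def age_def)
qed

context rotation_process
begin

lemma AE_regular: "AE \<omega> in M. regular (X \<omega>)"
proof -
  have "AE w in M. \<forall>k (c::nat). \<exists>n. arrival e k n w > real c"
    by (simp add: AE_all_countable AE_arrival_exceeds)
  with AE_interarrival_pos AE_rotation_SO show ?thesis
    by eventually_elim (simp add: regular_def arrival_def)
qed

lemma pred_regular_X[measurable]: "Measurable.pred M (\<lambda>\<omega>. regular (X \<omega>))"
  using measurable_compose[OF measurable_X pred_regular[OF sets_SO[OF g_haar]]] by (simp add: comp_def)

lemma integrable_coord_functional:
  fixes F :: "('k, 'd) coord \<Rightarrow> real"
  assumes "F \<in> borel_measurable coord_space" "AE \<omega> in M. \<bar>F (X \<omega>)\<bar> \<le> 1"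
  shows "integrable M (\<lambda>\<omega>. F (X \<omega>))"
proof (rule integrable_const_bound[where B=1])
  show "(\<lambda>\<omega>. F (X \<omega>)) \<in> borel_measurable M"
    using measurable_compose[OF measurable_X assms(1)] by (simp add: comp_def)
qed (use assms(2) in simp)

lemma integral_weighted_psi_counts_split:
  assumes A[measurable]: "A \<in> sets borel" and t: "0 \<le> t"
  shows "(\<integral>\<omega>. (if counts_at_tau m (X \<omega>) then weighted_psi nhat A k i t (X \<omega>) else 0) \<partial>M) =
    (\<integral>\<omega>. no_jump_term nhat A m k i t (X \<omega>) \<partial>M) +
    (\<Sum>a\<in>UNIV. \<Sum>b\<in>UNIV. \<integral>\<omega>. jump_coeff nhat A m k i t a b (X \<omega>) * clip (rot_coord k (m k) (X \<omega>) $ b $ a) \<partial>M)"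
proof -
  have "(\<integral>\<omega>. (if counts_at_tau m (X \<omega>) then weighted_psi nhat A k i t (X \<omega>) else 0) \<partial>M) =
    (\<integral>\<omega>. no_jump_term nhat A m k i t (X \<omega>) +
      (\<Sum>a\<in>UNIV. \<Sum>b\<in>UNIV. jump_coeff nhat A m k i t a b (X \<omega>) * clip (rot_coord k (m k) (X \<omega>) $ b $ a)) \<partial>M)"
  proof (rule integral_cong_AE)
    show "AE \<omega> in M. (if counts_at_tau m (X \<omega>) then weighted_psi nhat A k i t (X \<omega>) else 0) =
      no_jump_term nhat A m k i t (X \<omega>) +
      (\<Sum>a\<in>UNIV. \<Sum>b\<in>UNIV. jump_coeff nhat A m k i t a b (X \<omega>) * clip (rot_coord k (m k) (X \<omega>) $ b $ a))"
      using AE_regular by eventually_elim (rule weighted_psi_decomposition[OF _ norm_nhat t])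
  qed measurable
  also have "\<dots> = (\<integral>\<omega>. no_jump_term nhat A m k i t (X \<omega>) \<partial>M) +
    (\<Sum>a\<in>UNIV. \<Sum>b\<in>UNIV. \<integral>\<omega>. jump_coeff nhat A m k i t a b (X \<omega>) * clip (rot_coord k (m k) (X \<omega>) $ b $ a) \<partial>M)"
  proof -
    have "integrable M (\<lambda>\<omega>. no_jump_term nhat A m k i t (X \<omega>))"
      by (rule integrable_coord_functional) (simp_all add: abs_no_jump_term_le)
    moreover have "integrable M (\<lambda>\<omega>. jump_coeff nhat A m k i t a b (X \<omega>) * clip (rot_coord k (m k) (X \<omega>) $ b $ a))"
      for a b
      by (rule integrable_coord_functional[where F="\<lambda>x. jump_coeff nhat A m k i t a b x * clip (rot_coord k (m k) x $ b $ a)"])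
         (simp_all add: abs_jump_summand_le)
    ultimately show ?thesis
      by (simp add: integral_sum)
  qed
  finally show ?thesis .
qed

lemma integral_clip_rotation_entry: "(\<integral>\<omega>. clip (g k n \<omega> $ b $ a) \<partial>M) = 0"
proof -
  have "(\<integral>\<omega>. clip (g k n \<omega> $ b $ a) \<partial>M) = (\<integral>\<omega>. g k n \<omega> $ b $ a \<partial>M)"
    using AE_rotation_SO by (intro integral_cong_AE) (auto simp: clip_eq SO_entry_bound)
  also have "\<dots> = (\<integral>B. B $ b $ a \<partial>distr M borel (g k n))"
    by (rule integral_distr[symmetric]) measurable
  also have "\<dots> = 0"
    by (rule SO_haar_integral_entry[OF card_ge_2 g_haar])
  finally show ?thesis .
qed

text \<open>Resampling the rotation \<open>g k (m k)\<close> leaves the coefficient unchanged, and the rotation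
  itself has centred entries.\<close>

lemma integral_jump_summand:
  assumes [measurable]: "A \<in> sets borel"
  shows "(\<integral>\<omega>. jump_coeff nhat A m k i t a b (X \<omega>) * clip (rot_coord k (m k) (X \<omega>) $ b $ a) \<partial>M) = 0"
proof -
  let ?i = "Inr (k, m k) :: ('k \<times> nat) + ('k \<times> nat)"
  have "(\<integral>\<omega>. jump_coeff nhat A m k i t a b (X \<omega>) * clip (rot_coord k (m k) (X \<omega>) $ b $ a) \<partial>M) =
    (\<integral>\<omega>. \<integral>\<omega>'. jump_coeff nhat A m k i t a b ((X \<omega>)(?i := X \<omega>' ?i)) *
       clip (rot_coord k (m k) ((X \<omega>)(?i := X \<omega>' ?i)) $ b $ a) \<partial>M \<partial>M)"
    by (rule integral_resample_coord[where C=1]) (simp_all add: abs_jump_summand_le)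
  also have "\<dots> = (\<integral>\<omega>. jump_coeff nhat A m k i t a b (X \<omega>) * (\<integral>\<omega>'. clip (g k (m k) \<omega>' $ b $ a) \<partial>M) \<partial>M)"
    by (simp add: jump_coeff_fun_upd rot_coord_def coords_def)
  finally show ?thesis
    by (simp add: integral_clip_rotation_entry)
qed

lemma integral_exponential_tail:
  assumes "0 \<le> s"
  shows "(\<integral>\<omega>. (if e k n \<omega> > s then c else 0) \<partial>M) = c * exp (- s * lam)"
proof -
  have "(\<integral>\<omega>. (if e k n \<omega> > s then c else 0) \<partial>M) = (\<integral>\<omega>. c * indicator {\<omega>\<in>space M. s < e k n \<omega>} \<omega> \<partial>M)"
    by (rule Bochner_Integration.integral_cong) (auto simp: indicator_def)
  also have "\<dots> = c * prob {\<omega>\<in>space M. s < e k n \<omega>}"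
    by simp
  finally show ?thesis
    using exponential_distributedD_gt[OF e_exponential assms lam_pos] by simp
qed

end

context rotation_process
begin

text \<open>Resampling the interarrival time \<open>e k (m k)\<close> and using memorylessness of the exponential
  law turns the no-jump condition on \<open>(tau, tau + t]\<close> into the factor \<open>exp (- lam * t)\<close>.\<close>

lemma integral_no_jump_term_eq:
  assumes [measurable]: "A \<in> sets borel" and "m k \<ge> 1" "0 \<le> t"
  shows "(\<integral>\<omega>. no_jump_term nhat A m k i t (X \<omega>) \<partial>M) =
    (\<integral>\<omega>. (if counts_at_tau_except m k (X \<omega>)
        then frozen_term nhat A m k i (X \<omega>) * exp (- (age m k (X \<omega>) + t) * lam) else 0) \<partial>M)"
proof -
  let ?i = "Inl (k, m k) :: ('k \<times> nat) + ('k \<times> nat)"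
  have coord_i: "X \<omega>' ?i $ undefined $ undefined = e k (m k) \<omega>'" for \<omega>'
    by (simp add: coords_def mat_def)
  have age_nonneg: "counts_at_tau_except m k x \<Longrightarrow> 0 \<le> age m k x" for x :: "('k, 'd) coord"
    by (simp add: counts_at_tau_except_def age_def)
  have "(\<integral>\<omega>. no_jump_term nhat A m k i t (X \<omega>) \<partial>M) =
      (\<integral>\<omega>. \<integral>\<omega>'. no_jump_term nhat A m k i t ((X \<omega>)(?i := X \<omega>' ?i)) \<partial>M \<partial>M)"
    by (rule integral_resample_coord[where C=1]) (simp_all add: abs_no_jump_term_le)
  also have "\<dots> = (\<integral>\<omega>. \<integral>\<omega>'. (if counts_at_tau_except m k (X \<omega>) \<and> e k (m k) \<omega>' > age m k (X \<omega>) + t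
      then frozen_term nhat A m k i (X \<omega>) else 0) \<partial>M \<partial>M)"
    unfolding no_jump_term_fun_upd[of m k, OF assms(2)] coord_i ..
  also have "\<dots> = (\<integral>\<omega>. (if counts_at_tau_except m k (X \<omega>)
        then frozen_term nhat A m k i (X \<omega>) * exp (- (age m k (X \<omega>) + t) * lam) else 0) \<partial>M)"
  proof (intro Bochner_Integration.integral_cong refl)
    fix \<omega>
    show "(\<integral>\<omega>'. (if counts_at_tau_except m k (X \<omega>) \<and> e k (m k) \<omega>' > age m k (X \<omega>) + t
        then frozen_term nhat A m k i (X \<omega>) else 0) \<partial>M) =
      (if counts_at_tau_except m k (X \<omega>)
        then frozen_term nhat A m k i (X \<omega>) * exp (- (age m k (X \<omega>) + t) * lam) else 0)"
      using age_nonneg[of "X \<omega>"] assms(3) by (simp add: integral_exponential_tail)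
  qed
  finally show ?thesis .
qed

lemma integral_no_jump_term:
  assumes A[measurable]: "A \<in> sets borel" and t: "0 \<le> t"
  shows "(\<integral>\<omega>. no_jump_term nhat A m k i t (X \<omega>) \<partial>M) =
    exp (- lam * t) * (\<integral>\<omega>. no_jump_term nhat A m k i 0 (X \<omega>) \<partial>M)"
proof (cases "m k = 0")
  case True
  then show ?thesis
    using t by (simp add: no_jump_term_0)
next
  case False
  then have mk: "m k \<ge> 1"
    by simp
  have "(\<integral>\<omega>. no_jump_term nhat A m k i t (X \<omega>) \<partial>M) =
    (\<integral>\<omega>. exp (- lam * t) * (if counts_at_tau_except m k (X \<omega>)
        then frozen_term nhat A m k i (X \<omega>) * exp (- (age m k (X \<omega>) + 0) * lam) else 0) \<partial>M)"
    unfolding integral_no_jump_term_eq[where m=m and k=k, OF A mk t]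
    by (rule Bochner_Integration.integral_cong) (auto simp: algebra_simps exp_add[symmetric])
  then show ?thesis
    unfolding integral_no_jump_term_eq[where m=m and k=k, OF A mk order_refl] by simp
qed

end

context rotation_process
begin

lemma integral_weighted_psi_counts:
  assumes A[measurable]: "A \<in> sets borel" and t: "0 \<le> t"
  shows "(\<integral>\<omega>. (if counts_at_tau m (X \<omega>) then weighted_psi nhat A k i t (X \<omega>) else 0) \<partial>M) =
    exp (- lam * t) * (\<integral>\<omega>. (if counts_at_tau m (X \<omega>) then weighted_psi nhat A k i 0 (X \<omega>) else 0) \<partial>M)"
  unfolding integral_weighted_psi_counts_split[OF A t] integral_weighted_psi_counts_split[OF A order_refl]
    integral_jump_summand[OF A] integral_no_jump_term[OF A t] by simp

lemma integral_weighted_psi: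
  assumes A[measurable]: "A \<in> sets borel" and t: "0 \<le> t"
  shows "(\<integral>\<omega>. weighted_psi nhat A k i t (X \<omega>) \<partial>M) = exp (- lam * t) * (\<integral>\<omega>. weighted_psi nhat A k i 0 (X \<omega>) \<partial>M)"
proof -
  have integrable: "integrable M (\<lambda>\<omega>. weighted_psi nhat A k i s (X \<omega>))" for s
    using AE_regular by (intro integrable_coord_functional) (auto simp: abs_weighted_psi_le[OF _ norm_nhat])
  have integrable_counts:
    "integrable M (\<lambda>\<omega>. if counts_at_tau m (X \<omega>) then weighted_psi nhat A k i s (X \<omega>) else 0)" for m s
    using AE_regular
    by (intro integrable_coord_functional[where F="\<lambda>x. if counts_at_tau m x then weighted_psi nhat A k i s x else 0"])
       (auto simp: abs_weighted_psi_le[OF _ norm_nhat])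
  define f where "f \<omega> = weighted_psi nhat A k i t (X \<omega>) - exp (- lam * t) * weighted_psi nhat A k i 0 (X \<omega>)" for \<omega>
  have [measurable]: "f \<in> borel_measurable M"
    unfolding f_def by measurable
  have "integral\<^sup>L M f = 0"
  proof (rule integral_eq_0_countable_partition[where P="\<lambda>m \<omega>. regular (X \<omega>) \<and> counts_at_tau m (X \<omega>)"])
    fix m :: "'k \<Rightarrow> nat"
    have "(\<integral>\<omega>. (if regular (X \<omega>) \<and> counts_at_tau m (X \<omega>) then f \<omega> else 0) \<partial>M) =
      (\<integral>\<omega>. (if counts_at_tau m (X \<omega>) then weighted_psi nhat A k i t (X \<omega>) else 0) -
        exp (- lam * t) * (if counts_at_tau m (X \<omega>) then weighted_psi nhat A k i 0 (X \<omega>) else 0) \<partial>M)"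
      using AE_regular by (intro integral_cong_AE) (measurable, auto simp: f_def)
    also have "\<dots> = 0"
      using integrable_counts by (simp add: integral_weighted_psi_counts[OF A t])
    finally show "(\<integral>\<omega>. (if regular (X \<omega>) \<and> counts_at_tau m (X \<omega>) then f \<omega> else 0) \<partial>M) = 0" .
  next
    show "AE \<omega> in M. \<exists>m. regular (X \<omega>) \<and> counts_at_tau m (X \<omega>)"
      using AE_regular by eventually_elim (use counts_at_tau_exists in blast)
  qed (use integrable counts_at_tau_unique in \<open>auto simp: f_def[abs_def]\<close>)
  then show ?thesis
    using integrable by (simp add: f_def[abs_def])
qed

lemma integral_indicator_psi:
  assumes A: "A \<in> sets borel" and t: "0 \<le> t"
  shows "(\<integral>w. indicator A (psi e g nhat 0 w) * psi e g nhat t w $ k $ i \<partial>M) =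
    (\<integral>w. indicator A (psi e g nhat 0 w) * (exp (- lam * t) * psi e g nhat 0 w $ k $ i) \<partial>M)"
  using integral_weighted_psi[OF A t, of k i]
  by (simp add: weighted_psi_def psi_coords[of e g nhat _] mult_ac)

lemma integrable_psi_component: "integrable M (\<lambda>w. psi e g nhat t w $ k $ i)"
  using AE_regular unfolding psi_coords[of e g nhat t]
  by (intro integrable_coord_functional[where F="\<lambda>x. psi time_coord rot_coord nhat t x $ k $ i"])
     (auto simp: abs_psi_le[OF _ norm_nhat])

end

theorem mainTheorem5:
  fixes M :: "'w measure"
    and e :: "'k::finite \<Rightarrow> nat \<Rightarrow> 'w \<Rightarrow> real"
    and g :: "'k \<Rightarrow> nat \<Rightarrow> 'w \<Rightarrow> real^'d^'d"
    and nhat :: "real^'d"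
    and lam :: real
  assumes "prob_space M"
    and "CARD('d) \<ge> 2"
    and "lam > 0"
    and "norm nhat = 1"
    and "\<And>k n. distributed M lborel (e k n) (exponential_density lam)"
    and "\<And>k n. g k n \<in> borel_measurable M"
    and "\<And>k n. SO_haar (distr M borel (g k n))"
    and "all_indep M e g"
  shows "\<forall>t\<ge>0. \<forall>k i. AE w in M.
           real_cond_exp M (vimage_algebra (space M) (psi e g nhat 0) borel)
             (\<lambda>w. psi e g nhat t w $ k $ i) w
           = exp (- lam * t) * (psi e g nhat 0 w $ k $ i)"
proof (intro allI impI)
  fix t :: real and k i
  assume t: "0 \<le> t"
  interpret rotation_process M e g nhat lam
    by (rule rotation_process.intro[OF assms(1) rotation_process_axioms.intro[OF assms(2-8)]])
  show "AE w in M. real_cond_exp M (vimage_algebra (space M) (psi e g nhat 0) borel)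
      (\<lambda>w. psi e g nhat t w $ k $ i) w = exp (- lam * t) * (psi e g nhat 0 w $ k $ i)"
    by (rule real_cond_exp_vimage_algebra_charact[where h="\<lambda>v. exp (- lam * t) * v $ k $ i"])
       (simp_all add: integrable_psi_component integral_indicator_psi[OF _ t])
qed

end
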